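(* Let $D$ be an infinite division ring, let $n\ge 2$, and let $N$ be a non-central subgroup of $G:=\mathrm{GL}_n(D)$ (i.e. $N$ is not contained in the center of $G$). Then the following conditions are equivalent: (1) $N$ is almost subnormal in $G$; (2) $N$ is subnormal in $G$; (3) $N$ is normal in $G$; (4) $N$ contains $\mathrm{SL}_n(D)$.
   Context: A subgroup $H$ of a group $K$ is almost subnormal in $K$ if there is a chain of subgroups $H=H_r\le H_{r-1}\le\cdots\le H_1=K$ such that for each $1<i\le r$, either $H_i$ is normal in $H_{i-1}$ or $H_i$ has finite index in $H_{i-1}$. $\mathrm{SL}_n(D)$ denotes the subgroup of $\mathrm{GL}_n(D)$ generated by elementary (transvection) matrices. *)

theory Defs
  imports "HOL-Analysis.Analysis" "HOL-Algebra.Coset" "HOL-Algebra.Generated_Groups"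
begin

definition GL :: "('a::division_ring ^'n^'n) monoid" where
  "GL = \<lparr>carrier = {A. invertible A}, mult = (**), one = mat 1\<rparr>"

definition group_center :: "('a, 'b) monoid_scheme \<Rightarrow> 'a set" where
  "group_center G = {z \<in> carrier G. \<forall>g \<in> carrier G. z \<otimes>\<^bsub>G\<^esub> g = g \<otimes>\<^bsub>G\<^esub> z}"

definition transvection :: "'n \<Rightarrow> 'n \<Rightarrow> 'a::division_ring \<Rightarrow> 'a^'n^'n" where
  "transvection i j a = (\<chi> k l. (if k = l then 1 else 0) + (if k = i \<and> l = j then a else 0))"

definition elementary_matrices :: "('a::division_ring ^'n^'n) set" where
  "elementary_matrices = {transvection i j a | i j a. i \<noteq> j}"

definition SL :: "('a::division_ring ^'n^'n) set" where
  "SL = generate GL elementary_matrices"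

definition almost_subnormal :: "'a set \<Rightarrow> ('a, 'b) monoid_scheme \<Rightarrow> bool" where
  "almost_subnormal H G \<longleftrightarrow> (\<exists>r Hs. Hs 0 = carrier G \<and> Hs r = H \<and>
     (\<forall>i\<le>r. subgroup (Hs i) G) \<and>
     (\<forall>i<r. Hs (Suc i) \<subseteq> Hs i \<and>
        (Hs (Suc i) \<lhd> G\<lparr>carrier := Hs i\<rparr> \<or>
         finite (rcosets\<^bsub>G\<lparr>carrier := Hs i\<rparr>\<^esub> Hs (Suc i)))))"

definition subnormal :: "'a set \<Rightarrow> ('a, 'b) monoid_scheme \<Rightarrow> bool" where
  "subnormal H G \<longleftrightarrow> (\<exists>r Hs. Hs 0 = carrier G \<and> Hs r = H \<and>
     (\<forall>i\<le>r. subgroup (Hs i) G) \<and>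
     (\<forall>i<r. Hs (Suc i) \<subseteq> Hs i \<and> Hs (Suc i) \<lhd> G\<lparr>carrier := Hs i\<rparr>))"

end

theory Submission
  imports Defs
begin

text \<open>
  Conditions (3) \<Rightarrow> (2) \<Rightarrow> (1) are trivial. For (4) \<Rightarrow> (3), Gaussian elimination writes every
  \<open>g \<in> GL\<^sub>n(D)\<close> as \<open>e \<cdot> diag(c, 1, \<dots>, 1)\<close> with \<open>e \<in> SL\<^sub>n(D)\<close>; hence \<open>SL\<^sub>n(D)\<close> is
  normal, all commutators of \<open>GL\<^sub>n(D)\<close> lie in \<open>SL\<^sub>n(D)\<close>, and every subgroup containing
  \<open>SL\<^sub>n(D)\<close> is normal.

  The substance is (1) \<Rightarrow> (4). A non-central subgroup \<open>M\<close> normalized by \<open>SL\<^sub>n(D)\<close>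
  contains \<open>SL\<^sub>n(D)\<close>: such an \<open>M\<close> moves some line, and after conjugating by \<open>SL\<^sub>n(D)\<close>
  it maps a fixed line to every other line. Hence \<open>SL\<^sub>n(D) \<subseteq> M U\<close> for the abelian group
  \<open>U\<close> of row shears \<open>I + e\<^sub>p w\<^sup>T\<close> (which fixes \<open>e\<^sub>p\<close>), so all commutators of
  \<open>SL\<^sub>n(D)\<close> lie in \<open>M\<close>; over an infinite division ring every transvection is a product of
  such commutators. Along an almost subnormal chain, \<open>SL\<^sub>n(D)\<close> then passes from each term to
  the next: directly for a normal step, and through the normal core for a step of finite index,
  the core being non-central because two of the infinitely many transvections \<open>t\<^sub>p\<^sub>q(a)\<close>
  lie in the same coset of it.
\<close>

lemma (in group) inv_cancel_left [simp]:
  "x \<in> carrier G \<Longrightarrow> y \<in> carrier G \<Longrightarrow> inv x \<otimes> (x \<otimes> y) = y"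
  "x \<in> carrier G \<Longrightarrow> y \<in> carrier G \<Longrightarrow> x \<otimes> (inv x \<otimes> y) = y"
  by (simp_all flip: m_assoc)

lemma (in normal) commutator_mod_normal:
  assumes "a \<in> H" "b \<in> H" "x \<in> carrier G" "y \<in> carrier G"
    and "x \<otimes> y \<otimes> inv x \<otimes> inv y \<in> H"
  shows "(a \<otimes> x) \<otimes> (b \<otimes> y) \<otimes> inv (a \<otimes> x) \<otimes> inv (b \<otimes> y) \<in> H"
proof -
  have [simp]: "a \<in> carrier G" "b \<in> carrier G"
    using assms(1,2) subset by auto
  have "(a \<otimes> x) \<otimes> (b \<otimes> y) \<otimes> inv (a \<otimes> x) \<otimes> inv (b \<otimes> y)
      = a \<otimes> (x \<otimes> b \<otimes> inv x) \<otimes> (x \<otimes> y \<otimes> inv x \<otimes> inv y) \<otimes> (y \<otimes> inv a \<otimes> inv y) \<otimes> inv b"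
    using assms(3,4) by (simp add: m_assoc inv_mult_group)
  also have "\<dots> \<in> H"
  proof -
    have "x \<otimes> b \<otimes> inv x \<in> H" "y \<otimes> inv a \<otimes> inv y \<in> H"
      using assms by (auto intro: inv_op_closed2 subgroup.m_inv_closed[OF is_subgroup])
    then show ?thesis
      using assms by (simp add: subgroup.m_closed[OF is_subgroup] subgroup.m_inv_closed[OF is_subgroup])
  qed
  finally show ?thesis .
qed

lemma (in group) normal_if_contains_commutators:
  assumes "subgroup N G"
    and "\<And>g h. g \<in> carrier G \<Longrightarrow> h \<in> carrier G \<Longrightarrow> g \<otimes> h \<otimes> inv g \<otimes> inv h \<in> N"
  shows "N \<lhd> G"
proof (rule normal_invI[OF assms(1)])
  fix g h
  assume "g \<in> carrier G" "h \<in> N"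
  moreover from this have "h \<in> carrier G" using subgroup.subset[OF assms(1)] by auto
  ultimately have "g \<otimes> h \<otimes> inv g = (g \<otimes> h \<otimes> inv g \<otimes> inv h) \<otimes> h"
    by (simp add: m_assoc)
  also have "\<dots> \<in> N"
    using assms \<open>g \<in> carrier G\<close> \<open>h \<in> N\<close> \<open>h \<in> carrier G\<close> by (simp add: subgroup.m_closed)
  finally show "g \<otimes> h \<otimes> inv g \<in> N" .
qed

lemma normal_imp_subnormal:
  assumes "N \<lhd> G"
  shows "subnormal N G"
  unfolding subnormal_def
proof (intro exI[of _ "1::nat"] exI[of _ "\<lambda>i. if i = 0 then carrier G else N"] conjI allI impI)
  fix i :: nat
  assume "i \<le> 1"
  then show "subgroup (if i = 0 then carrier G else N) G"
    using assms by (auto intro: normal_imp_subgroup group.subgroup_self normal.axioms(2))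
next
  fix i :: nat
  assume "i < 1"
  then show "(if Suc i = 0 then carrier G else N) \<subseteq> (if i = 0 then carrier G else N)"
    and "(if Suc i = 0 then carrier G else N) \<lhd> G\<lparr>carrier := if i = 0 then carrier G else N\<rparr>"
    using assms normal_imp_subgroup[OF assms] subgroup.subset by auto
qed simp_all

lemma subnormal_imp_almost_subnormal: "subnormal N G \<Longrightarrow> almost_subnormal N G"
  unfolding subnormal_def almost_subnormal_def by blast

lemma (in group) subgroup_set_mult_if_normalizes:
  assumes M: "subgroup M G" and U: "subgroup U G"
    and normalizes: "\<And>u m. u \<in> U \<Longrightarrow> m \<in> M \<Longrightarrow> u \<otimes> m \<otimes> inv u \<in> M"
  shows "subgroup (M <#> U) G"
proof (rule subgroupI)
  show "M <#> U \<subseteq> carrier G"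
    using subgroup.mem_carrier[OF M] subgroup.mem_carrier[OF U] by (auto simp: set_mult_def)
  show "M <#> U \<noteq> {}"
    using subgroup.one_closed[OF M] subgroup.one_closed[OF U] by (auto simp: set_mult_def)
next
  fix x
  assume "x \<in> M <#> U"
  then obtain m u where mu: "m \<in> M" "u \<in> U" "x = m \<otimes> u"
    by (auto simp: set_mult_def)
  then have "inv x = (inv u \<otimes> inv m \<otimes> inv (inv u)) \<otimes> inv u"
    using subgroup.mem_carrier[OF M] subgroup.mem_carrier[OF U] by (simp add: inv_mult_group m_assoc)
  moreover have "inv u \<in> U" "inv m \<in> M"
    using mu M U by (auto intro: subgroup.m_inv_closed)
  moreover from this have "inv u \<otimes> inv m \<otimes> inv (inv u) \<in> M"
    by (rule normalizes)
  ultimately show "inv x \<in> M <#> U"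
    by (auto simp: set_mult_def)
next
  fix x y
  assume "x \<in> M <#> U" "y \<in> M <#> U"
  then obtain m u m' u' where mu: "m \<in> M" "u \<in> U" "x = m \<otimes> u" "m' \<in> M" "u' \<in> U" "y = m' \<otimes> u'"
    by (auto simp: set_mult_def)
  then have "x \<otimes> y = (m \<otimes> (u \<otimes> m' \<otimes> inv u)) \<otimes> (u \<otimes> u')"
    using subgroup.mem_carrier[OF M] subgroup.mem_carrier[OF U] by (simp add: m_assoc)
  moreover have "m \<otimes> (u \<otimes> m' \<otimes> inv u) \<in> M" "u \<otimes> u' \<in> U"
    using mu M U by (auto intro: normalizes subgroup.m_closed)
  ultimately show "x \<otimes> y \<in> M <#> U"
    by (auto simp: set_mult_def)
qed

text \<open>\<open>M\<close> is normal in \<open>M U\<close>, and \<open>M U / M\<close> is a quotient of the abelian group \<open>U\<close>.\<close>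

lemma (in group) commutator_in_if_set_mult_abelian:
  assumes M: "subgroup M G" and U: "subgroup U G"
    and normalizes: "\<And>u m. u \<in> U \<Longrightarrow> m \<in> M \<Longrightarrow> u \<otimes> m \<otimes> inv u \<in> M"
    and abelian: "\<And>u v. u \<in> U \<Longrightarrow> v \<in> U \<Longrightarrow> u \<otimes> v = v \<otimes> u"
    and "x \<in> M <#> U" "y \<in> M <#> U"
  shows "x \<otimes> y \<otimes> inv x \<otimes> inv y \<in> M"
proof -
  have [simp]: "x \<in> carrier G" if "x \<in> M" for x
    using that subgroup.subset[OF M] by blast
  have [simp]: "x \<in> carrier G" if "x \<in> U" for x
    using that subgroup.subset[OF U] by blast
  obtain m u m' u' where mu: "m \<in> M" "u \<in> U" "x = m \<otimes> u" "m' \<in> M" "u' \<in> U" "y = m' \<otimes> u'"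
    using assms(5,6) by (auto simp: set_mult_def)
  have "inv u \<in> U" "inv u' \<in> U" "inv m \<in> M" "inv m' \<in> M"
    using mu M U by (auto intro: subgroup.m_inv_closed)
  moreover have "u' \<otimes> (inv u \<otimes> z) = inv u \<otimes> (u' \<otimes> z)" if "z \<in> carrier G" for z
    using that mu \<open>inv u \<in> U\<close> abelian[of u' "inv u"] by (simp flip: m_assoc)
  ultimately have "x \<otimes> y \<otimes> inv x \<otimes> inv y = m \<otimes> (u \<otimes> m' \<otimes> inv u) \<otimes> (u' \<otimes> inv m \<otimes> inv u') \<otimes> inv m'"
    using mu by (simp add: inv_mult_group m_assoc)
  also have "\<dots> \<in> M"
    using mu M U \<open>inv m \<in> M\<close> \<open>inv m' \<in> M\<close>
    by (auto intro!: subgroup.m_closed[OF M] normalizes)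
  finally show ?thesis .
qed

text \<open>Equivalently, the kernel of the action of \<open>H\<close> on the right cosets of \<open>K\<close>.\<close>

definition normal_core :: "('a, 'b) monoid_scheme \<Rightarrow> 'a set \<Rightarrow> 'a set \<Rightarrow> 'a set" where
  "normal_core G H K = {c \<in> H. \<forall>a\<in>H. a \<otimes>\<^bsub>G\<^esub> c \<otimes>\<^bsub>G\<^esub> inv\<^bsub>G\<^esub> a \<in> K}"

lemma (in group) subgroup_normal_core:
  assumes H: "subgroup H G" and K: "subgroup K G"
  shows "subgroup (normal_core G H K) G"
proof (rule subgroupI)
  show "normal_core G H K \<subseteq> carrier G"
    using subgroup.mem_carrier[OF H] by (auto simp: normal_core_def)
  show "normal_core G H K \<noteq> {}"
    using subgroup.one_closed[OF H] subgroup.one_closed[OF K] subgroup.mem_carrier[OF H]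
    by (auto simp: normal_core_def)
next
  fix c
  assume c: "c \<in> normal_core G H K"
  have "a \<otimes> inv c \<otimes> inv a \<in> K" if "a \<in> H" for a
  proof -
    have "a \<otimes> inv c \<otimes> inv a = inv (a \<otimes> c \<otimes> inv a)"
      using c that subgroup.mem_carrier[OF H] by (simp add: normal_core_def inv_mult_group m_assoc)
    then show ?thesis
      using c that by (simp add: normal_core_def subgroup.m_inv_closed[OF K])
  qed
  with c show "inv c \<in> normal_core G H K"
    by (simp add: normal_core_def subgroup.m_inv_closed[OF H])
next
  fix c d
  assume c: "c \<in> normal_core G H K" and d: "d \<in> normal_core G H K"
  have "a \<otimes> (c \<otimes> d) \<otimes> inv a \<in> K" if "a \<in> H" for a
  proof -
    have "a \<otimes> (c \<otimes> d) \<otimes> inv a = (a \<otimes> c \<otimes> inv a) \<otimes> (a \<otimes> d \<otimes> inv a)"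
      using c d that subgroup.mem_carrier[OF H] by (simp add: normal_core_def m_assoc)
    then show ?thesis
      using c d that by (simp add: normal_core_def subgroup.m_closed[OF K])
  qed
  with c d show "c \<otimes> d \<in> normal_core G H K"
    by (simp add: normal_core_def subgroup.m_closed[OF H])
qed

lemma (in group) normal_core_subset:
  assumes "subgroup H G"
  shows "normal_core G H K \<subseteq> K"
  using subgroup.one_closed[OF assms] subgroup.subset[OF assms] by (force simp: normal_core_def)

lemma (in group) normal_core_conj_closed:
  assumes H: "subgroup H G" and "h \<in> H" "c \<in> normal_core G H K"
  shows "h \<otimes> c \<otimes> inv h \<in> normal_core G H K"
proof -
  have [simp]: "x \<in> carrier G" if "x \<in> H" for x
    using that subgroup.subset[OF H] by blast
  have "a \<otimes> (h \<otimes> c \<otimes> inv h) \<otimes> inv a = (a \<otimes> h) \<otimes> c \<otimes> inv (a \<otimes> h)" if "a \<in> H" for a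
    using assms that by (simp add: normal_core_def inv_mult_group m_assoc)
  then show ?thesis
    using assms by (simp add: normal_core_def subgroup.m_closed subgroup.m_inv_closed)
qed

lemma (in group) conj_in_subgroup_if_rcos_eq:
  assumes K: "subgroup K G" and "a \<in> carrier G" "x \<in> carrier G" "y \<in> carrier G"
    and "K #> a #> x = K #> a #> y"
  shows "a \<otimes> (x \<otimes> inv y) \<otimes> inv a \<in> K"
proof -
  have Kc: "K \<subseteq> carrier G" using subgroup.subset[OF K] .
  have "K #> (a \<otimes> x) = K #> (a \<otimes> y)"
    using assms by (simp add: coset_mult_assoc[OF Kc])
  then have "K #> ((a \<otimes> x) \<otimes> inv (a \<otimes> y)) = K"
    using assms by (intro coset_mult_inv2) (auto simp: Kc)
  then have "(a \<otimes> x) \<otimes> inv (a \<otimes> y) \<in> K"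
    using assms by (intro coset_join1[OF _ _ K]) auto
  moreover have "(a \<otimes> x) \<otimes> inv (a \<otimes> y) = a \<otimes> (x \<otimes> inv y) \<otimes> inv a"
    using assms by (simp add: inv_mult_group m_assoc)
  ultimately show ?thesis by simp
qed

text \<open>\<open>H\<close> permutes the finitely many cosets of \<open>K\<close>, so the infinite family \<open>f\<close> cannot act
  injectively on them.\<close>

lemma (in group) normal_core_pigeonhole:
  fixes f :: "'i \<Rightarrow> 'a"
  assumes H: "subgroup H G" and K: "subgroup K G"
    and fin: "finite (rcosets\<^bsub>G\<lparr>carrier := H\<rparr>\<^esub> K)"
    and inf: "infinite (UNIV :: 'i set)" and f: "range f \<subseteq> H"
  shows "\<exists>i j. i \<noteq> j \<and> f i \<otimes> inv (f j) \<in> normal_core G H K"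
proof -
  have [simp]: "x \<in> carrier G" if "x \<in> H" for x
    using that subgroup.subset[OF H] by blast
  have Kc: "K \<subseteq> carrier G" using subgroup.subset[OF K] .
  define R where "R = rcosets\<^bsub>G\<lparr>carrier := H\<rparr>\<^esub> K"
  have R: "R = {K #> a | a. a \<in> H}"
    unfolding R_def RCOSETS_def r_coset_def by auto
  define act where "act i = (\<lambda>X\<in>R. X #> f i)" for i
  have "X #> f i \<in> R" if X: "X \<in> R" for X i
  proof -
    obtain a where "a \<in> H" "X = K #> a" using X R by blast
    moreover have "f i \<in> H" using f by blast
    moreover from calculation have "a \<otimes> f i \<in> H" using subgroup.m_closed[OF H] by blast
    ultimately show ?thesis
      using coset_mult_assoc[OF Kc, of a "f i"] R by auto
  qed
  then have "range act \<subseteq> R \<rightarrow>\<^sub>E R" by (auto simp: act_def)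
  moreover have "finite (R \<rightarrow>\<^sub>E R)"
    using fin unfolding R_def by (intro finite_PiE)
  ultimately have "\<not> inj act"
    using inf finite_imageD finite_subset by blast
  then obtain i j where ij: "i \<noteq> j" "act i = act j"
    unfolding inj_def by blast
  have "a \<otimes> (f i \<otimes> inv (f j)) \<otimes> inv a \<in> K" if a: "a \<in> H" for a
  proof -
    have "K #> a \<in> R" using a R by blast
    then have "K #> a #> f i = K #> a #> f j"
      using fun_cong[OF ij(2), of "K #> a"] by (simp add: act_def)
    then show ?thesis
      using a f by (intro conj_in_subgroup_if_rcos_eq[OF K]) (auto simp: image_subset_iff)
  qed
  moreover have "f i \<otimes> inv (f j) \<in> H"
    using f by (simp add: image_subset_iff subgroup.m_closed[OF H] subgroup.m_inv_closed[OF H])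
  ultimately show ?thesis
    using ij(1) by (auto simp: normal_core_def)
qed

section \<open>An additive generation property of infinite division rings\<close>

text \<open>For \<open>v \<notin> {1, 2}\<close> put \<open>x = v - 2\<close>; then \<open>x \<noteq> 0 \<noteq> x + 1\<close> and
  \<open>v = ((x+1) x (x+1) - x) - (x x x - x) - 2 (x 1 x - 1)\<close>.
  Since the ring is infinite, every \<open>z\<close> splits as \<open>v + (z - v)\<close> with both summands \<open>\<notin> {1, 2}\<close>.\<close>

lemma infinite_division_ring_additively_generated:
  fixes P :: "'a::division_ring \<Rightarrow> bool"
  assumes inf: "infinite (UNIV::'a set)"
    and add: "\<And>x y. P x \<Longrightarrow> P y \<Longrightarrow> P (x + y)" and neg: "\<And>x. P x \<Longrightarrow> P (-x)"
    and generators: "\<And>d c. d \<noteq> 0 \<Longrightarrow> P (d * c * d - c)"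
  shows "P z"
proof -
  have P_v: "P v" if "v \<noteq> 1" "v \<noteq> 2" for v
  proof -
    define x where "x = v - 2"
    have v: "v = x + 1 + 1" by (simp add: x_def algebra_simps flip: one_add_one)
    have "x + 1 \<noteq> 0"
      using that(1) v by auto
    moreover have "x \<noteq> 0"
      using that(2) v by (auto simp: one_add_one)
    moreover have "v = ((x+1)*x*(x+1) - x) + (-(x*x*x - x)) + (-(x*1*x - 1)) + (-(x*1*x - 1))"
      using v by (simp add: algebra_simps)
    ultimately show ?thesis by (metis add neg generators one_neq_zero)
  qed
  obtain v :: 'a where v: "v \<notin> {1, 2, z - 1, z - 2}"
    using ex_new_if_finite[OF inf, of "{1, 2, z - 1, z - 2}"] by auto
  have "P (v + (z - v))"
    using v by (intro add P_v) (auto simp: algebra_simps)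
  then show ?thesis by simp
qed

section \<open>The groups \<open>GL\<^sub>n(D)\<close> and \<open>SL\<^sub>n(D)\<close>\<close>

lemma two_distinct_elements:
  assumes "CARD('n) \<ge> 2"
  obtains i j :: "'n::finite" where "i \<noteq> j"
proof -
  have "\<not> CARD('n) \<le> Suc 0" using assms by simp
  then show ?thesis using that by (auto simp: card_le_Suc0_iff_eq)
qed

lemma GL_simps [simp]:
  "carrier (GL::('a::division_ring^'n^'n) monoid) = {A. invertible A}"
  "mult (GL::('a::division_ring^'n^'n) monoid) = (**)"
  "one (GL::('a::division_ring^'n^'n) monoid) = mat 1"
  by (simp_all add: GL_def)

lemma invertible_mat_1: "invertible (mat 1 :: 'a::semiring_1^'n^'n)"
  unfolding invertible_def by (rule exI[of _ "mat 1"]) simp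

lemma group_GL: "group (GL::('a::division_ring^'n^'n) monoid)"
proof (rule groupI)
  fix x :: "'a^'n^'n"
  assume "x \<in> carrier GL"
  then obtain y where "x ** y = mat 1" "y ** x = mat 1"
    by (auto simp: invertible_def)
  then show "\<exists>y\<in>carrier GL. y \<otimes>\<^bsub>GL\<^esub> x = \<one>\<^bsub>GL\<^esub>"
    by (auto simp: invertible_def)
qed (auto simp: invertible_mult invertible_mat_1 matrix_mul_assoc)

lemma GL_inv_eqI:
  fixes A B :: "'a::division_ring^'n^'n"
  assumes "invertible A" "A ** B = mat 1"
  shows "inv\<^bsub>GL\<^esub> A = B"
proof -
  interpret group "GL::('a^'n^'n) monoid" by (rule group_GL)
  obtain A' where A': "A ** A' = mat 1" "A' ** A = mat 1"
    using assms(1) unfolding invertible_def by blast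
  have "B = A'"
    by (metis A'(2) assms(2) matrix_mul_assoc matrix_mul_lid matrix_mul_rid)
  with A' assms show ?thesis
    by (intro inv_equality) (auto simp: invertible_def)
qed

lemma GL_inv_simps [simp]:
  fixes A :: "'a::division_ring^'n^'n"
  assumes "invertible A"
  shows "A ** inv\<^bsub>GL\<^esub> A = mat 1" "inv\<^bsub>GL\<^esub> A ** A = mat 1" "invertible (inv\<^bsub>GL\<^esub> A)"
  using assms group.r_inv[OF group_GL, of A] group.l_inv[OF group_GL, of A]
    group.inv_closed[OF group_GL, of A]
  by auto

lemma GL_inv_inv [simp]: "invertible (A::'a::division_ring^'n^'n) \<Longrightarrow> inv\<^bsub>GL\<^esub> (inv\<^bsub>GL\<^esub> A) = A"
  using group.inv_inv[OF group_GL, of A] by simp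

lemma GL_inv_mult:
  "invertible (A::'a::division_ring^'n^'n) \<Longrightarrow> invertible B \<Longrightarrow>
   inv\<^bsub>GL\<^esub> (A ** B) = inv\<^bsub>GL\<^esub> B ** inv\<^bsub>GL\<^esub> A"
  using group.inv_mult_group[OF group_GL, of A B] by simp

lemma GL_inv_cancel [simp]:
  fixes A :: "'a::division_ring^'n^'n"
  assumes "invertible A"
  shows "inv\<^bsub>GL\<^esub> A ** (A ** X) = X" "A ** (inv\<^bsub>GL\<^esub> A ** X) = X"
  using assms by (simp_all add: matrix_mul_assoc)

lemma GL_inv_mult_vec:
  fixes A :: "'a::division_ring^'n^'n"
  assumes "invertible A" "A *v x = y"
  shows "inv\<^bsub>GL\<^esub> A *v y = x"
  using assms by (metis GL_inv_simps(2) matrix_vector_mul_assoc matrix_vector_mul_lid)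

lemma mult_if_distribs:
  "(if b then x else y) * z = (if b then x * z else y * (z::'a::times))"
  "z * (if b then x else y) = (if b then z * x else z * y)"
  "(if P \<and> Q then u else 0) = (if P then (if Q then u else 0) else 0)"
  by simp_all

lemma transvection_nth:
  "transvection i j a $ r $ l = (if r = l then 1 else 0) + (if r = i \<and> l = j then a else 0)"
  by (simp add: transvection_def)

lemma transvection_mult_left:
  "transvection i j a ** A = (\<chi> r l. A$r$l + (if r = i then a * A$j$l else 0))"
  by (simp add: vec_eq_iff matrix_matrix_mult_def transvection_def distrib_right
      sum.distrib mult_if_distribs sum.delta cong: if_cong)

lemma transvection_mult_right:
  "A ** transvection i j a = (\<chi> r l. A$r$l + (if l = j then A$r$i * a else 0))"
  by (simp add: vec_eq_iff matrix_matrix_mult_def transvection_def distrib_left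
      sum.distrib mult_if_distribs sum.delta' cong: if_cong)

lemma transvection_mult_vec:
  "transvection i j a *v x = (\<chi> r. x$r + (if r = i then a * x$j else 0))"
  by (simp add: vec_eq_iff matrix_vector_mult_def transvection_def distrib_right
      sum.distrib mult_if_distribs sum.delta cong: if_cong)

lemma mat_1_nth: "(mat 1 :: 'a::zero_neq_one^'n^'n) $ r $ l = (if r = l then 1 else 0)"
  by (simp add: mat_def)

lemma transvection_add:
  "i \<noteq> j \<Longrightarrow> transvection i j a ** transvection i j b = transvection i j (a + b)"
  by (auto simp: vec_eq_iff transvection_mult_left transvection_nth algebra_simps)

lemma transvection_0: "transvection i j 0 = mat 1"
  by (simp add: vec_eq_iff transvection_nth mat_1_nth)

lemma invertible_transvection:
  "i \<noteq> j \<Longrightarrow> invertible (transvection i j (a::'a::division_ring))"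
  unfolding invertible_def
  by (rule exI[of _ "transvection i j (-a)"]) (simp add: transvection_add transvection_0)

lemma GL_inv_transvection:
  "i \<noteq> j \<Longrightarrow> inv\<^bsub>GL\<^esub> (transvection i j (a::'a::division_ring)) = transvection i j (-a)"
  by (rule GL_inv_eqI) (simp_all add: invertible_transvection transvection_add transvection_0)

lemma transvection_commutator:
  "i \<noteq> p \<Longrightarrow> j \<noteq> p \<Longrightarrow> i \<noteq> j \<Longrightarrow>
    transvection i p 1 ** transvection p j a ** transvection i p (-1) ** transvection p j (-a)
      = transvection i j (a::'a::division_ring)"
  by (auto simp: vec_eq_iff transvection_mult_right transvection_nth)

lemma transvection_conj_weyl:
  "i \<noteq> p \<Longrightarrow>
    transvection p i 1 ** transvection i p (-1) ** transvection p i 1 ** transvection p i (-a)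
      = transvection i p a ** (transvection p i 1 ** transvection i p (-1) ** transvection p i (1::'a::division_ring))"
  by (auto simp: vec_eq_iff transvection_mult_right transvection_mult_left transvection_nth)

lemma transvection_not_central:
  fixes c :: "'a::division_ring"
  assumes "c \<noteq> 0" "p \<noteq> q"
  shows "transvection p q c \<notin> group_center GL"
proof
  assume "transvection p q c \<in> group_center GL"
  then have "transvection p q c ** transvection q p 1 = transvection q p 1 ** transvection p q c"
    using invertible_transvection[of q p 1] assms(2) by (auto simp: group_center_def)
  then have "(transvection p q c ** transvection q p 1)$p$p = (transvection q p 1 ** transvection p q c)$p$p"
    by simp
  then show False
    using assms by (simp add: transvection_mult_right transvection_mult_left transvection_nth)
qed

lemma subgroup_SL: "subgroup (SL::('a::division_ring^'n^'n) set) GL"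
  unfolding SL_def
  by (rule group.generate_is_subgroup[OF group_GL])
    (auto simp: elementary_matrices_def invertible_transvection)

lemma transvection_in_SL: "i \<noteq> j \<Longrightarrow> transvection i j (a::'a::division_ring) \<in> (SL::('a^'n^'n) set)"
  unfolding SL_def by (rule generate.incl) (auto simp: elementary_matrices_def)

lemma invertible_if_SL: "A \<in> SL \<Longrightarrow> invertible (A::'a::division_ring^'n^'n)"
  using subgroup.subset[OF subgroup_SL] by auto

lemma SL_mult_closed: "A \<in> SL \<Longrightarrow> B \<in> SL \<Longrightarrow> A ** B \<in> (SL::('a::division_ring^'n^'n) set)"
  using subgroup.m_closed[OF subgroup_SL] by fastforce

lemma SL_inv_closed: "A \<in> SL \<Longrightarrow> inv\<^bsub>GL\<^esub> A \<in> (SL::('a::division_ring^'n^'n) set)"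
  using subgroup.m_inv_closed[OF subgroup_SL] by fastforce

lemma mat_1_in_SL: "mat 1 \<in> (SL::('a::division_ring^'n^'n) set)"
  using subgroup.one_closed[OF subgroup_SL] by fastforce

lemma SL_subset_if_transvections:
  "subgroup H (GL::('a::division_ring^'n^'n) monoid) \<Longrightarrow>
   (\<And>i j a. i \<noteq> j \<Longrightarrow> transvection i j a \<in> H) \<Longrightarrow> SL \<subseteq> H"
  unfolding SL_def
  by (rule group.generate_subgroup_incl[OF group_GL]) (auto simp: elementary_matrices_def)

section \<open>Diagonal matrices and Gaussian elimination\<close>

text \<open>Over a division ring, matrices act on column vectors linearly with respect to scalars
  multiplied from the right, so lines are right multiples \<open>scale_right y c\<close>.\<close>

definition scale_right :: "'a::times^'n \<Rightarrow> 'a \<Rightarrow> 'a^'n" where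
  "scale_right x c = (\<chi> r. x$r * c)"

definition diag_mat :: "('n \<Rightarrow> 'a::zero) \<Rightarrow> 'a^'n^'n" where
  "diag_mat f = (\<chi> r l. if r = l then f r else 0)"

definition dilation :: "'n \<Rightarrow> 'a::division_ring \<Rightarrow> 'a^'n^'n" where
  "dilation p d = diag_mat (\<lambda>r. if r = p then d else 1)"

definition dilation_pair :: "'n \<Rightarrow> 'n \<Rightarrow> 'a::division_ring \<Rightarrow> 'a^'n^'n" where
  "dilation_pair i j d = diag_mat (\<lambda>r. if r = i then d else if r = j then inverse d else 1)"

lemma axis_nth_if: "axis i c $ r = (if r = i then c else 0)"
  by (simp add: axis_def)

lemma scale_right_nth [simp]: "scale_right x c $ r = x$r * c"
  by (simp add: scale_right_def)

lemma scale_right_scale_right [simp]: "scale_right (scale_right x c) d = scale_right x (c * (d::'a::semiring_1))"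
  by (simp add: vec_eq_iff mult.assoc)

lemma scale_right_1 [simp]: "scale_right x 1 = (x::'a::semiring_1^'n)"
  by (simp add: vec_eq_iff)

lemma axis_eq_scale_right: "axis p c = scale_right (axis p 1) (c::'a::semiring_1)"
  by (simp add: vec_eq_iff axis_nth_if)

lemma matrix_vector_mult_scale_right:
  "A *v scale_right x c = scale_right (A *v x) (c::'a::semiring_1)"
  by (simp add: vec_eq_iff matrix_vector_mult_def sum_distrib_right mult.assoc)

lemma matrix_vector_mult_axis_1: "(A *v axis i 1) $ r = A$r$i"
  by (simp add: matrix_vector_mult_def axis_def mult_if_distribs sum.delta' cong: if_cong)

lemma diag_mat_nth: "diag_mat f $ r $ l = (if r = l then f r else 0)"
  by (simp add: diag_mat_def)

lemma diag_mat_mult_left: "diag_mat f ** A = (\<chi> r l. f r * A$r$l)"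
  by (simp add: vec_eq_iff matrix_matrix_mult_def diag_mat_def mult_if_distribs sum.delta
      cong: if_cong)

lemma diag_mat_mult_right: "A ** diag_mat f = (\<chi> r l. A$r$l * f l)"
  by (simp add: vec_eq_iff matrix_matrix_mult_def diag_mat_def mult_if_distribs sum.delta'
      cong: if_cong)

lemma diag_mat_mult_vec: "diag_mat f *v x = (\<chi> r. f r * x$r)"
  by (simp add: vec_eq_iff matrix_vector_mult_def diag_mat_def mult_if_distribs sum.delta
      cong: if_cong)

lemma invertible_diag_mat:
  assumes "\<And>r. f r \<noteq> (0::'a::division_ring)"
  shows "invertible (diag_mat f :: 'a^'n^'n)"
  unfolding invertible_def using assms
  by (intro exI[of _ "diag_mat (\<lambda>r. inverse (f r))"])
    (auto simp: diag_mat_mult_left vec_eq_iff diag_mat_nth mat_1_nth)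

lemma invertible_dilation: "d \<noteq> 0 \<Longrightarrow> invertible (dilation p d)"
  unfolding dilation_def by (rule invertible_diag_mat) auto

lemma invertible_dilation_pair: "d \<noteq> 0 \<Longrightarrow> invertible (dilation_pair i j d)"
  unfolding dilation_pair_def by (rule invertible_diag_mat) auto

lemma GL_inv_dilation:
  "c \<noteq> 0 \<Longrightarrow> inv\<^bsub>GL\<^esub> (dilation p c) = dilation p (inverse (c::'a::division_ring))"
  by (rule GL_inv_eqI[OF invertible_dilation])
    (auto simp: dilation_def diag_mat_mult_left diag_mat_nth vec_eq_iff mat_1_nth)

lemma GL_inv_dilation_pair:
  "d \<noteq> 0 \<Longrightarrow> inv\<^bsub>GL\<^esub> (dilation_pair i j d) = dilation_pair i j (inverse (d::'a::division_ring))"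
  by (rule GL_inv_eqI[OF invertible_dilation_pair])
    (auto simp: dilation_pair_def diag_mat_mult_left diag_mat_nth vec_eq_iff mat_1_nth)

lemma dilation_pair_as_transvections:
  fixes d :: "'a::division_ring"
  assumes "i \<noteq> j" "d \<noteq> 0"
  shows "transvection i j d ** transvection j i (- inverse d) ** transvection i j d **
         transvection i j (-1) ** transvection j i 1 ** transvection i j (-1) = dilation_pair i j d"
  using assms
  by (auto simp: vec_eq_iff transvection_mult_right transvection_nth dilation_pair_def
      diag_mat_nth algebra_simps)

lemma dilation_pair_in_SL:
  "i \<noteq> j \<Longrightarrow> d \<noteq> 0 \<Longrightarrow> dilation_pair i j (d::'a::division_ring) \<in> (SL::('a^'n^'n) set)"
  by (metis dilation_pair_as_transvections SL_mult_closed transvection_in_SL)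

lemma dilation_pair_conj_transvection:
  "i \<noteq> j \<Longrightarrow> d \<noteq> 0 \<Longrightarrow> dilation_pair i j d ** transvection i j c ** dilation_pair i j (inverse d)
     = transvection i j (d * c * (d::'a::division_ring))"
  by (auto simp: vec_eq_iff dilation_pair_def diag_mat_mult_left diag_mat_mult_right transvection_nth)

lemma dilation_pair_fixes:
  fixes y :: "'a::division_ring^'n"
  assumes "y$k = 0" "y$p = 0"
  shows "dilation_pair k p d *v y = y"
  using assms by (auto simp: dilation_pair_def diag_mat_mult_vec vec_eq_iff)

lemma SL_clear_coordinates:
  fixes x :: "'a::division_ring^'n"
  assumes "x$b \<noteq> 0" "b \<notin> R"
  shows "\<exists>e\<in>SL. (\<forall>y. y$b = 0 \<longrightarrow> e *v y = y) \<and> e *v x = (\<chi> r. if r \<in> R then 0 else x$r)"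
proof -
  have "finite R" by simp
  then show ?thesis using assms(2)
  proof (induction R rule: finite_induct)
    case empty
    show ?case by (intro bexI[of _ "mat 1"]) (auto simp: mat_1_in_SL vec_eq_iff)
  next
    case (insert r R)
    then obtain e where e: "e \<in> SL" "\<forall>y. y$b = 0 \<longrightarrow> e *v y = y"
      "e *v x = (\<chi> r. if r \<in> R then 0 else x$r)" by auto
    have rb: "r \<noteq> b" using insert by auto
    let ?t = "transvection r b (- (x$r) * inverse (x$b))"
    show ?case
    proof (intro bexI[of _ "?t ** e"] conjI allI impI)
      show "?t ** e \<in> SL"
        using e(1) rb by (simp add: SL_mult_closed transvection_in_SL)
      fix y :: "'a^'n"
      assume "y$b = 0"
      then show "(?t ** e) *v y = y"
        using e(2) by (simp add: transvection_mult_vec vec_eq_iff flip: matrix_vector_mul_assoc)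
    next
      show "(?t ** e) *v x = (\<chi> ra. if ra \<in> insert r R then 0 else x $ ra)"
        using e(3) insert(2,4) assms(1) rb
        by (auto simp: transvection_mult_vec vec_eq_iff mult.assoc simp flip: matrix_vector_mul_assoc)
    qed
  qed
qed

lemma SL_reduce_to_axis:
  fixes x :: "'a::division_ring^'n"
  assumes "k \<notin> S" "i \<notin> S" "x$i \<noteq> 0"
  shows "\<exists>e\<in>SL. (\<forall>y. (\<forall>r. r \<notin> S \<longrightarrow> y$r = 0) \<longrightarrow> e *v y = y) \<and> (\<exists>c. c \<noteq> 0 \<and> e *v x = axis k c)"
proof -
  obtain e1 where e1: "e1 \<in> SL" "\<forall>y. (\<forall>r. r \<notin> S \<longrightarrow> y$r = 0) \<longrightarrow> e1 *v y = y" "(e1 *v x)$k \<noteq> 0"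
  proof (cases "x$k = 0")
    case False
    then show ?thesis by (intro that[of "mat 1"]) (auto simp: mat_1_in_SL)
  next
    case True
    then have "i \<noteq> k" using assms by auto
    with True assms show ?thesis
      by (intro that[of "transvection k i 1"]) (auto simp: transvection_in_SL transvection_mult_vec vec_eq_iff)
  qed
  obtain e2 where e2: "e2 \<in> SL" "\<forall>y. y$k = 0 \<longrightarrow> e2 *v y = y"
    "e2 *v (e1 *v x) = (\<chi> r. if r \<in> UNIV - {k} then 0 else (e1 *v x)$r)"
    using SL_clear_coordinates[OF e1(3), of "UNIV - {k}"] by auto
  show ?thesis
  proof (intro bexI[of _ "e2 ** e1"] conjI allI impI exI)
    show "e2 ** e1 \<in> SL" using e1 e2 by (simp add: SL_mult_closed)
    fix y :: "'a^'n"
    assume "\<forall>r. r \<notin> S \<longrightarrow> y$r = 0"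
    then show "(e2 ** e1) *v y = y"
      using e1(2) e2(2) assms(1) by (simp flip: matrix_vector_mul_assoc)
  next
    show "(e1 *v x)$k \<noteq> 0" by (rule e1(3))
    show "(e2 ** e1) *v x = axis k ((e1 *v x)$k)"
      using e2(3) by (auto simp: vec_eq_iff axis_nth_if simp flip: matrix_vector_mul_assoc)
  qed
qed

lemma SL_moves_axis_to_line:
  fixes y :: "'a::division_ring^'n"
  assumes "y \<noteq> 0"
  shows "\<exists>g\<in>SL. \<exists>c. c \<noteq> 0 \<and> g *v axis p 1 = scale_right y c"
proof -
  obtain i where i: "y$i \<noteq> 0" using assms by (auto simp: vec_eq_iff)
  obtain e c where e: "e \<in> SL" "c \<noteq> 0" "e *v y = axis p c"
    using SL_reduce_to_axis[of p "{}" i y] i by auto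
  have "scale_right (inv\<^bsub>GL\<^esub> e *v axis p 1) c = y"
    using GL_inv_mult_vec[OF invertible_if_SL[OF e(1)] e(3)]
    by (metis axis_eq_scale_right matrix_vector_mult_scale_right)
  then have "inv\<^bsub>GL\<^esub> e *v axis p 1 = scale_right y (inverse c)"
    using e(2) by (metis scale_right_1 scale_right_scale_right right_inverse)
  then show ?thesis
    using SL_inv_closed[OF e(1)] e(2) by (intro bexI[of _ "inv\<^bsub>GL\<^esub> e"] exI[of _ "inverse c"]) auto
qed

lemma SL_axis_stabilizer_moves_to_axis:
  fixes x :: "'a::division_ring^'n"
  assumes "x$k \<noteq> 0" "k \<noteq> p" "q \<noteq> p"
  shows "\<exists>h\<in>SL. h *v axis p 1 = axis p 1 \<and> (\<exists>c. c \<noteq> 0 \<and> h *v x = axis q c)"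
proof -
  obtain e where "e \<in> SL" "\<forall>y. (\<forall>r. r \<notin> {p} \<longrightarrow> y$r = 0) \<longrightarrow> e *v y = y"
    "\<exists>c. c \<noteq> 0 \<and> e *v x = axis q c"
    using SL_reduce_to_axis[of q "{p}" k x] assms by auto
  moreover from this(2) have "e *v axis p 1 = axis p 1" by (auto simp: axis_nth_if)
  ultimately show ?thesis by blast
qed

lemma invertible_column_nonzero_outside:
  fixes A :: "'a::division_ring^'n^'n"
  assumes A: "invertible A" and S: "\<forall>s\<in>S. A *v axis s 1 = axis s 1" and k: "k \<notin> S"
  shows "\<exists>i. i \<notin> S \<and> (A *v axis k 1)$i \<noteq> 0"
proof (rule ccontr)
  assume "\<not> ?thesis"
  then have x0: "\<And>i. i \<notin> S \<Longrightarrow> (A *v axis k 1)$i = 0" by blast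
  let ?x = "A *v axis k 1"
  define y where "y = (\<chi> l. if l \<in> S then ?x$l else 0)"
  have A_col: "A$r$l = (if r = l then 1 else 0)" if "l \<in> S" for r l
    using arg_cong[OF S[rule_format, OF that], of "\<lambda>v. v$r"]
    by (simp add: matrix_vector_mult_axis_1 axis_nth_if)
  have "A$r$l * y$l = (if l = r then (if r \<in> S then ?x$r else 0) else 0)" for r l
    by (cases "l \<in> S") (auto simp: y_def A_col)
  then have "A *v y = ?x"
    using x0 by (simp add: vec_eq_iff matrix_vector_mult_def sum.delta')
  then have "y = axis k 1"
    using GL_inv_mult_vec[OF A] by metis
  then have "y$k = 1" by simp
  with k show False by (simp add: y_def)
qed

lemma SL_normalizes_columns:
  fixes g :: "'a::division_ring^'n^'n"
  assumes "invertible g" "p \<notin> S"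
  shows "\<exists>e\<in>SL. \<forall>s\<in>S. (e ** g) *v axis s 1 = axis s 1"
proof -
  have "finite S" by simp
  then show ?thesis using assms(2)
  proof (induction S rule: finite_induct)
    case empty
    show ?case using mat_1_in_SL by auto
  next
    case (insert k S)
    then obtain e where e: "e \<in> SL" "\<forall>s\<in>S. (e ** g) *v axis s 1 = axis s 1" by auto
    let ?A = "e ** g"
    have "invertible ?A"
      using e(1) assms(1) by (simp add: invertible_if_SL invertible_mult)
    then obtain i where "i \<notin> S" "(?A *v axis k 1)$i \<noteq> 0"
      using invertible_column_nonzero_outside[OF _ e(2) insert.hyps(2)] by blast
    then obtain e' c where e': "e' \<in> SL" "\<forall>y. (\<forall>r. r \<notin> S \<longrightarrow> y$r = 0) \<longrightarrow> e' *v y = y"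
        "c \<noteq> 0" "e' *v (?A *v axis k 1) = axis k c"
      using SL_reduce_to_axis[OF insert.hyps(2)] by blast
    have kp: "k \<noteq> p" using insert.prems by auto
    define e'' where "e'' = dilation_pair k p (inverse c) ** e' ** e"
    have "e'' \<in> SL"
      unfolding e''_def using e(1) e'(1) e'(3) kp by (intro SL_mult_closed dilation_pair_in_SL) auto
    moreover have "(e'' ** g) *v axis s 1 = axis s 1" if "s \<in> insert k S" for s
    proof (cases "s = k")
      case True
      then show ?thesis
        using e'(3,4) kp
        by (simp add: e''_def dilation_pair_def diag_mat_mult_vec vec_eq_iff axis_nth_if
            flip: matrix_vector_mul_assoc)
    next
      case False
      then have "s \<in> S" "s \<noteq> p" using that insert.prems by auto
      then show ?thesis
        using e(2) e'(2) insert.hyps(2) False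
        by (simp add: e''_def dilation_pair_fixes axis_nth_if flip: matrix_vector_mul_assoc)
    qed
    ultimately show ?case by blast
  qed
qed

lemma SL_mult_eq_dilation:
  fixes g :: "'a::division_ring^'n^'n"
  assumes "invertible g"
  shows "\<exists>e\<in>SL. \<exists>c. c \<noteq> 0 \<and> e ** g = dilation p c"
proof -
  obtain e where e: "e \<in> SL" "\<forall>s\<in>UNIV - {p}. (e ** g) *v axis s 1 = axis s 1"
    using SL_normalizes_columns[OF assms, of p "UNIV - {p}"] by auto
  let ?A = "e ** g"
  have "invertible ?A"
    using e(1) assms by (simp add: invertible_if_SL invertible_mult)
  then obtain i where "i \<notin> UNIV - {p}" "(?A *v axis p 1)$i \<noteq> 0"
    using invertible_column_nonzero_outside[OF _ e(2)] by blast
  then obtain e' c where e': "e' \<in> SL" "\<forall>y. (\<forall>r. r \<notin> UNIV - {p} \<longrightarrow> y$r = 0) \<longrightarrow> e' *v y = y"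
      "c \<noteq> 0" "e' *v (?A *v axis p 1) = axis p c"
    using SL_reduce_to_axis[of p "UNIV - {p}"] by blast
  have "((e' ** e) ** g) *v axis l 1 = dilation p c *v axis l 1" for l
    using e(2) e'(2,4)
    by (cases "l = p")
      (auto simp: dilation_def diag_mat_mult_vec vec_eq_iff axis_nth_if simp flip: matrix_vector_mul_assoc)
  then have "(e' ** e) ** g = dilation p c"
    by (simp add: vec_eq_iff matrix_vector_mult_axis_1[symmetric])
  moreover have "e' ** e \<in> SL" using e e' by (simp add: SL_mult_closed)
  ultimately show ?thesis using e'(3) by blast
qed

section \<open>Subgroups containing \<open>SL\<^sub>n(D)\<close> are normal\<close>

lemma SL_conj_closed_if_transvections:
  fixes h :: "'a::division_ring^'n^'n"
  assumes h: "invertible h"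
    and transvections: "\<And>i j a. i \<noteq> j \<Longrightarrow> h ** transvection i j a ** inv\<^bsub>GL\<^esub> h \<in> SL"
    and "x \<in> SL"
  shows "h ** x ** inv\<^bsub>GL\<^esub> h \<in> SL"
proof -
  let ?K = "{x. invertible x \<and> h ** x ** inv\<^bsub>GL\<^esub> h \<in> (SL::('a^'n^'n) set)}"
  have "subgroup ?K GL"
  proof (rule group.subgroupI[OF group_GL])
    have "mat 1 \<in> ?K"
      using h mat_1_in_SL invertible_mat_1 by simp
    then show "?K \<noteq> {}" by blast
  next
    fix a
    assume a: "a \<in> ?K"
    then have "inv\<^bsub>GL\<^esub> (h ** a ** inv\<^bsub>GL\<^esub> h) = h ** inv\<^bsub>GL\<^esub> a ** inv\<^bsub>GL\<^esub> h"
      using h by (intro GL_inv_eqI) (simp_all add: invertible_mult flip: matrix_mul_assoc)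
    then show "inv\<^bsub>GL\<^esub> a \<in> ?K"
      using a SL_inv_closed[of "h ** a ** inv\<^bsub>GL\<^esub> h"] by auto
  next
    fix a b
    assume "a \<in> ?K" "b \<in> ?K"
    moreover have "h ** (a ** b) ** inv\<^bsub>GL\<^esub> h = (h ** a ** inv\<^bsub>GL\<^esub> h) ** (h ** b ** inv\<^bsub>GL\<^esub> h)"
      using h by (simp flip: matrix_mul_assoc)
    ultimately show "a \<otimes>\<^bsub>GL\<^esub> b \<in> ?K" by (auto simp: SL_mult_closed invertible_mult)
  qed auto
  then have "SL \<subseteq> ?K"
    by (rule SL_subset_if_transvections) (use transvections invertible_transvection in blast)
  with \<open>x \<in> SL\<close> show ?thesis by blast
qed

lemma dilation_conj_SL:
  assumes "c \<noteq> 0" "x \<in> SL"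
  shows "dilation p c ** x ** inv\<^bsub>GL\<^esub> (dilation p c) \<in> (SL::('a::division_ring^'n^'n) set)"
proof (rule SL_conj_closed_if_transvections[OF invertible_dilation[OF assms(1)] _ assms(2)])
  fix i j :: 'n and a :: 'a
  assume "i \<noteq> j"
  moreover have "dilation p c ** transvection i j a ** inv\<^bsub>GL\<^esub> (dilation p c) =
        transvection i j ((if i = p then c else 1) * a * (if j = p then inverse c else 1))"
    unfolding GL_inv_dilation[OF assms(1)] using \<open>i \<noteq> j\<close> assms(1)
    by (auto simp: dilation_def diag_mat_mult_left diag_mat_mult_right vec_eq_iff
        transvection_nth)
  ultimately show "dilation p c ** transvection i j a ** inv\<^bsub>GL\<^esub> (dilation p c) \<in> SL"
    by (simp add: transvection_in_SL)
qed

lemma SL_normal: "(SL::('a::division_ring^'n^'n) set) \<lhd> GL"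
proof (rule group.normal_invI[OF group_GL subgroup_SL])
  fix g x :: "'a^'n^'n"
  assume "g \<in> carrier GL" "x \<in> SL"
  then obtain e c where e: "e \<in> SL" "c \<noteq> 0" "e ** g = dilation p c"
    using SL_mult_eq_dilation by fastforce
  let ?d = "dilation p c"
  have e_inv: "invertible e" "invertible (inv\<^bsub>GL\<^esub> e)"
    using invertible_if_SL[OF e(1)] by auto
  have g: "g = inv\<^bsub>GL\<^esub> e ** ?d"
    using e(3) e_inv by (metis GL_inv_cancel(1))
  then have "inv\<^bsub>GL\<^esub> g = inv\<^bsub>GL\<^esub> ?d ** e"
    using GL_inv_mult[OF e_inv(2) invertible_dilation[OF e(2)]] e_inv by simp
  with g have "g ** x ** inv\<^bsub>GL\<^esub> g = inv\<^bsub>GL\<^esub> e ** (?d ** x ** inv\<^bsub>GL\<^esub> ?d) ** e"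
    by (simp add: matrix_mul_assoc)
  also have "\<dots> \<in> SL"
    using e \<open>x \<in> SL\<close> by (intro SL_mult_closed SL_inv_closed dilation_conj_SL)
  finally show "g \<otimes>\<^bsub>GL\<^esub> x \<otimes>\<^bsub>GL\<^esub> inv\<^bsub>GL\<^esub> g \<in> SL" by simp
qed

lemma inverse_mult_cancel_left: "c \<noteq> 0 \<Longrightarrow> inverse c * (c * x) = (x::'a::division_ring)"
  by (simp flip: mult.assoc)

lemma dilation_commutator_in_SL:
  fixes c c' :: "'a::division_ring"
  assumes "c \<noteq> 0" "c' \<noteq> 0" "p \<noteq> q"
  shows "dilation p c ** dilation p c' ** inv\<^bsub>GL\<^esub> (dilation p c) ** inv\<^bsub>GL\<^esub> (dilation p c')
    \<in> (SL::('a^'n^'n) set)"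
proof -
  have "dilation p c ** dilation p c' ** inv\<^bsub>GL\<^esub> (dilation p c) ** inv\<^bsub>GL\<^esub> (dilation p c') =
        dilation_pair p q (c * c') ** dilation_pair p q (inverse c) ** dilation_pair p q (inverse c')"
    unfolding GL_inv_dilation[OF assms(1)] GL_inv_dilation[OF assms(2)] using assms
    by (auto simp: dilation_def dilation_pair_def diag_mat_mult_left
        diag_mat_mult_right vec_eq_iff diag_mat_nth nonzero_inverse_mult_distrib mult.assoc
        inverse_mult_cancel_left)
  also have "\<dots> \<in> SL"
    using assms by (intro SL_mult_closed dilation_pair_in_SL) auto
  finally show ?thesis .
qed

lemma GL_commutator_in_SL:
  fixes g h :: "'a::division_ring^'n^'n"
  assumes "CARD('n) \<ge> 2" "invertible g" "invertible h"
  shows "g ** h ** inv\<^bsub>GL\<^esub> g ** inv\<^bsub>GL\<^esub> h \<in> SL"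
proof -
  obtain p q :: 'n where "p \<noteq> q"
    using two_distinct_elements[OF assms(1)] by blast
  obtain e c where e: "e \<in> SL" "c \<noteq> 0" "e ** g = dilation p c"
    using SL_mult_eq_dilation[OF assms(2)] by blast
  obtain e' c' where e': "e' \<in> SL" "c' \<noteq> 0" "e' ** h = dilation p c'"
    using SL_mult_eq_dilation[OF assms(3)] by blast
  have "g = inv\<^bsub>GL\<^esub> e ** dilation p c" "h = inv\<^bsub>GL\<^esub> e' ** dilation p c'"
    using e(3) e'(3) invertible_if_SL[OF e(1)] invertible_if_SL[OF e'(1)]
    by (metis GL_inv_cancel(1))+
  moreover have "dilation p c \<in> carrier GL" "dilation p c' \<in> carrier GL"
    using invertible_dilation e(2) e'(2) by auto
  ultimately show ?thesis
    using normal.commutator_mod_normal[OF SL_normal SL_inv_closed[OF e(1)] SL_inv_closed[OF e'(1)]]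
      dilation_commutator_in_SL[OF e(2) e'(2) \<open>p \<noteq> q\<close>]
    by (simp only: GL_simps)
qed

lemma normal_if_SL_subset:
  fixes N :: "('a::division_ring^'n^'n) set"
  assumes "CARD('n) \<ge> 2" "subgroup N GL" "SL \<subseteq> N"
  shows "N \<lhd> GL"
proof (rule group.normal_if_contains_commutators[OF group_GL assms(2)])
  fix g h :: "'a^'n^'n"
  assume "g \<in> carrier GL" "h \<in> carrier GL"
  then show "g \<otimes>\<^bsub>GL\<^esub> h \<otimes>\<^bsub>GL\<^esub> inv\<^bsub>GL\<^esub> g \<otimes>\<^bsub>GL\<^esub> inv\<^bsub>GL\<^esub> h \<in> N"
    using GL_commutator_in_SL[OF assms(1)] assms(3) by auto
qed

section \<open>Subgroups normalized by \<open>SL\<^sub>n(D)\<close>\<close>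

definition row_shear :: "'n \<Rightarrow> 'a::semiring_1^'n \<Rightarrow> 'a^'n^'n" where
  "row_shear p w = (\<chi> r l. (if r = l then 1 else 0) + (if r = p then w$l else 0))"

definition row_shears :: "'n \<Rightarrow> ('a::semiring_1^'n^'n) set" where
  "row_shears p = {row_shear p w | w. w$p = 0}"

lemma row_shear_nth:
  "row_shear p w $ r $ l = (if r = l then 1 else 0) + (if r = p then w$l else 0)"
  by (simp add: row_shear_def)

lemma row_shear_mult_left:
  "row_shear p w ** A = (\<chi> r l. A$r$l + (if r = p then (w v* A)$l else 0))"
  by (simp add: vec_eq_iff matrix_matrix_mult_def row_shear_def vector_matrix_mult_def distrib_right
      sum.distrib mult_if_distribs sum.delta cong: if_cong)

lemma row_shear_mult_right: "A ** row_shear p w = (\<chi> r l. A$r$l + A$r$p * w$l)"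
  by (simp add: vec_eq_iff matrix_matrix_mult_def row_shear_def distrib_left
      sum.distrib mult_if_distribs sum.delta' cong: if_cong)

lemma vector_matrix_mult_row_shear: "w $ p = 0 \<Longrightarrow> w v* row_shear p w' = w"
  by (simp add: vec_eq_iff vector_matrix_mult_def row_shear_def distrib_left
      sum.distrib mult_if_distribs sum.delta' cong: if_cong)

lemma row_shear_add: "w $ p = 0 \<Longrightarrow> row_shear p w ** row_shear p w' = row_shear p (w + w')"
  by (simp add: row_shear_mult_left vector_matrix_mult_row_shear vec_eq_iff row_shear_nth
      algebra_simps)

lemma row_shear_0: "row_shear p 0 = mat 1"
  by (simp add: vec_eq_iff row_shear_nth mat_1_nth)

lemma invertible_row_shear: "w $ p = 0 \<Longrightarrow> invertible (row_shear p (w::'a::division_ring^'n))"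
  unfolding invertible_def by (rule exI[of _ "row_shear p (-w)"]) (simp add: row_shear_add row_shear_0)

lemma GL_inv_row_shear:
  "w $ p = 0 \<Longrightarrow> inv\<^bsub>GL\<^esub> (row_shear p (w::'a::division_ring^'n)) = row_shear p (-w)"
  by (rule GL_inv_eqI) (simp_all add: invertible_row_shear row_shear_add row_shear_0)

lemma transvection_eq_row_shear: "j \<noteq> p \<Longrightarrow> transvection p j a = row_shear p (axis j a)"
  by (auto simp: vec_eq_iff transvection_nth row_shear_nth axis_nth_if)

lemma transvection_in_row_shears: "j \<noteq> p \<Longrightarrow> transvection p j a \<in> row_shears p"
  by (auto simp: row_shears_def transvection_eq_row_shear axis_nth_if)

lemma row_shear_in_SL: "w $ p = 0 \<Longrightarrow> row_shear p (w::'a::division_ring^'n) \<in> SL"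
proof -
  have "row_shear p w \<in> SL" if "w$p = 0" "\<forall>l. l \<notin> R \<longrightarrow> w$l = 0" for R :: "'n set" and w
  proof -
    have "finite R" by simp
    then show ?thesis
      using that
    proof (induction R arbitrary: w rule: finite_induct)
      case empty
      then have "w = 0" by (auto simp: vec_eq_iff)
      then show ?case by (simp add: row_shear_0 mat_1_in_SL)
    next
      case (insert j R)
      define w0 where "w0 = (\<chi> l. if l = j then 0 else w$l)"
      have w0: "w0$p = 0" "\<forall>l. l \<notin> R \<longrightarrow> w0$l = 0"
        using insert.prems by (auto simp: w0_def)
      show ?case
      proof (cases "j = p")
        case True
        then show ?thesis using insert.prems by (intro insert.IH) auto
      next
        case False
        have "w0 + axis j (w$j) = w"
          by (simp add: w0_def axis_def vec_eq_iff)
        then have "row_shear p w = row_shear p w0 ** transvection p j (w$j)"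
          using w0 False by (simp add: transvection_eq_row_shear row_shear_add)
        then show ?thesis using insert.IH[OF w0] False by (simp add: SL_mult_closed transvection_in_SL)
      qed
    qed
  qed
  then show "w $ p = 0 \<Longrightarrow> row_shear p w \<in> SL" by blast
qed

lemma row_shears_subset_SL: "row_shears p \<subseteq> (SL::('a::division_ring^'n^'n) set)"
  by (auto simp: row_shears_def row_shear_in_SL)

lemma subgroup_row_shears: "subgroup (row_shears p) (GL::('a::division_ring^'n^'n) monoid)"
proof (rule group.subgroupI[OF group_GL])
  show "row_shears p \<subseteq> carrier (GL::('a^'n^'n) monoid)"
    by (auto simp: row_shears_def invertible_row_shear)
  have "row_shear p 0 \<in> row_shears p"
    by (auto simp: row_shears_def)
  then show "row_shears p \<noteq> {}" by blast
next
  fix u :: "'a^'n^'n"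
  assume "u \<in> row_shears p"
  then show "inv\<^bsub>GL\<^esub> u \<in> row_shears p"
    by (auto simp: row_shears_def GL_inv_row_shear)
next
  fix u v :: "'a^'n^'n"
  assume "u \<in> row_shears p" "v \<in> row_shears p"
  then show "u \<otimes>\<^bsub>GL\<^esub> v \<in> row_shears p"
    by (auto simp: row_shears_def row_shear_add)
qed

lemma row_shears_commute: "u \<in> row_shears p \<Longrightarrow> v \<in> row_shears p \<Longrightarrow> u ** v = v ** u"
  by (auto simp: row_shears_def row_shear_add add.commute)

text \<open>A matrix that fixes the line through \<open>axis p 1\<close> normalizes \<open>row_shears p\<close>:
  \<open>h (I + e\<^sub>p w\<^sup>T) h\<^sup>-\<^sup>1 = I + e\<^sub>p (d w\<^sup>T h\<^sup>-\<^sup>1)\<close> when \<open>h e\<^sub>p = e\<^sub>p d\<close>.\<close>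

lemma conj_row_shears:
  fixes h :: "'a::division_ring^'n^'n"
  assumes h: "invertible h" "h *v axis p 1 = axis p d" "d \<noteq> 0" and u: "u \<in> row_shears p"
  shows "h ** u ** inv\<^bsub>GL\<^esub> h \<in> row_shears p"
proof -
  obtain w where w: "u = row_shear p w" "w$p = 0" using u by (auto simp: row_shears_def)
  let ?h' = "inv\<^bsub>GL\<^esub> h"
  have h_col: "h$r$p = (if r = p then d else 0)" for r
    using arg_cong[OF h(2), of "\<lambda>v. v$r"] by (simp add: matrix_vector_mult_axis_1 axis_nth_if)
  have "scale_right (?h' *v axis p 1) d = axis p 1"
    using GL_inv_mult_vec[OF h(1,2)] by (metis axis_eq_scale_right matrix_vector_mult_scale_right)
  then have "scale_right (scale_right (?h' *v axis p 1) d) (inverse d) = scale_right (axis p 1) (inverse d)"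
    by simp
  then have h'_axis: "?h' *v axis p 1 = axis p (inverse d)"
    using h(3) by (simp flip: axis_eq_scale_right)
  have h'_col: "?h'$r$p = (if r = p then inverse d else 0)" for r
    using arg_cong[OF h'_axis, of "\<lambda>v. v$r"] by (simp add: matrix_vector_mult_axis_1 axis_nth_if)
  define w' where "w' = (d *s w) v* ?h'"
  have "w'$p = 0"
    by (simp add: w'_def vector_matrix_mult_def h'_col mult_if_distribs sum.delta' w cong: if_cong)
  have "w' v* h = d *s w"
    unfolding w'_def by (simp add: vector_matrix_mul_assoc h(1))
  then have "row_shear p w' ** h = h ** row_shear p w"
    by (simp add: row_shear_mult_left row_shear_mult_right vec_eq_iff h_col)
  then have "h ** u ** ?h' = row_shear p w' ** h ** ?h'"
    using w(1) by simp
  also have "\<dots> = row_shear p w'"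
    using h(1) by (simp flip: matrix_mul_assoc)
  finally have "h ** u ** ?h' = row_shear p w'" .
  with \<open>w'$p = 0\<close> show ?thesis by (auto simp: row_shears_def)
qed

lemma central_if_preserves_lines:
  fixes m :: "'a::division_ring^'n^'n"
  assumes "invertible m" "CARD('n) \<ge> 2"
    and lines: "\<And>y::'a^'n. y \<noteq> 0 \<Longrightarrow> \<exists>c. m *v y = scale_right y c"
  shows "m \<in> group_center GL"
proof -
  have diag: "m$r$l = (if r = l then m$l$l else 0)" for r l
  proof -
    obtain c where c: "m *v axis l 1 = scale_right (axis l 1) c"
      using lines[of "axis l 1"] by auto
    show ?thesis
      using arg_cong[OF c, of "\<lambda>v. v$r"] arg_cong[OF c, of "\<lambda>v. v$l"]
      by (simp add: matrix_vector_mult_axis_1 axis_nth_if)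
  qed
  then have m_diag: "m = diag_mat (\<lambda>r. m$r$r)"
    unfolding vec_eq_iff diag_mat_nth by metis
  have comm: "m$j$j * a = a * m$i$i" if "i \<noteq> j" for i j a
  proof -
    let ?y = "(\<chi> r. if r = i then 1 else if r = j then a else 0) :: 'a^'n"
    have "?y $ i \<noteq> 0" by simp
    then have "?y \<noteq> 0" by (metis zero_index)
    then obtain c where "m *v ?y = scale_right ?y c" using lines by blast
    then have "(m *v ?y)$i = scale_right ?y c $ i" "(m *v ?y)$j = scale_right ?y c $ j"
      by simp_all
    then show ?thesis
      using that by (subst (asm) (1 2) m_diag) (simp add: diag_mat_mult_vec)
  qed
  obtain i0 j0 :: 'n where "i0 \<noteq> j0" using two_distinct_elements[OF assms(2)] by blast
  define lam where "lam = m$i0$i0"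
  have same: "m$j$j = lam" for j
    using comm[of i0 j 1] by (cases "j = i0") (auto simp: lam_def)
  then have "lam * a = a * lam" for a
    using comm[OF \<open>i0 \<noteq> j0\<close>, of a] by simp
  with same have "m ** g = g ** m" for g :: "'a^'n^'n"
    by (subst (1 2) m_diag) (simp add: diag_mat_mult_left diag_mat_mult_right)
  then show ?thesis using assms(1) by (simp add: group_center_def)
qed

locale SL_normalized_subgroup =
  fixes M :: "('a::division_ring^'n^'n) set"
  assumes subgroup_M: "subgroup M GL"
    and SL_normalizes: "\<And>e m. e \<in> SL \<Longrightarrow> m \<in> M \<Longrightarrow> e ** m ** inv\<^bsub>GL\<^esub> e \<in> M"
    and not_central: "\<not> M \<subseteq> group_center GL"
    and card_ge_2: "CARD('n) \<ge> 2"
begin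

lemma invertible_if_M: "m \<in> M \<Longrightarrow> invertible m"
  using subgroup.subset[OF subgroup_M] by auto

lemma M_mult_closed: "m \<in> M \<Longrightarrow> m' \<in> M \<Longrightarrow> m ** m' \<in> M"
  using subgroup.m_closed[OF subgroup_M] by fastforce

lemma M_inv_closed: "m \<in> M \<Longrightarrow> inv\<^bsub>GL\<^esub> m \<in> M"
  using subgroup.m_inv_closed[OF subgroup_M] by fastforce

lemma mat_1_in_M: "mat 1 \<in> M"
  using subgroup.one_closed[OF subgroup_M] by simp

lemma exists_moving_axis: "\<exists>m\<in>M. \<exists>k. k \<noteq> p \<and> (m *v axis p 1)$k \<noteq> 0"
proof -
  obtain m y where my: "m \<in> M" "y \<noteq> 0" "\<And>c. m *v y \<noteq> scale_right y c"
    using not_central central_if_preserves_lines[OF _ card_ge_2] invertible_if_M by blast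
  obtain g c where g: "g \<in> SL" "c \<noteq> 0" "g *v axis p 1 = scale_right y c"
    using SL_moves_axis_to_line[OF my(2)] by blast
  have g_inv: "invertible g" using invertible_if_SL[OF g(1)] .
  define m1 where "m1 = inv\<^bsub>GL\<^esub> g ** m ** g"
  have "m1 \<in> M"
    using SL_normalizes[OF SL_inv_closed[OF g(1)] my(1)] g_inv by (simp add: m1_def)
  moreover have "\<exists>k. k \<noteq> p \<and> (m1 *v axis p 1)$k \<noteq> 0"
  proof (rule ccontr)
    assume contra: "\<not> ?thesis"
    define c0 where "c0 = (m1 *v axis p 1)$p"
    have "m1 *v axis p 1 = axis p c0"
      using contra by (auto simp: vec_eq_iff axis_nth_if c0_def)
    then have m1_axis: "m1 *v axis p 1 = scale_right (axis p 1) c0"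
      by (simp flip: axis_eq_scale_right)
    have "scale_right (m *v y) c = m *v (g *v axis p 1)"
      using g(3) by (simp add: matrix_vector_mult_scale_right)
    also have "\<dots> = g *v (m1 *v axis p 1)"
      using g_inv by (simp add: m1_def matrix_vector_mul_assoc matrix_mul_assoc)
    also have "\<dots> = scale_right y (c * c0)"
      using g(3) by (simp add: m1_axis matrix_vector_mult_scale_right)
    finally have "scale_right (scale_right (m *v y) c) (inverse c) = scale_right y (c * c0 * inverse c)"
      by simp
    then have "m *v y = scale_right y (c * c0 * inverse c)"
      using g(2) by (simp add: mult.assoc)
    with my(3) show False by blast
  qed
  ultimately show ?thesis by blast
qed

text \<open>Elements of \<open>SL\<close> fixing \<open>axis p 1\<close> move both \<open>m\<^sub>1 *v axis p 1\<close> and \<open>y\<close> onto the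
  \<open>q\<close>-axis; conjugating \<open>m\<^sub>1\<close> by the resulting \<open>h\<close> maps \<open>axis p 1\<close> onto the line of \<open>y\<close>.\<close>

lemma transitive_on_lines_off_axis:
  assumes k: "k \<noteq> p" "y$k \<noteq> 0"
  shows "\<exists>m\<in>M. \<exists>c. c \<noteq> 0 \<and> m *v axis p 1 = scale_right y c"
proof -
  obtain m1 q where m1: "m1 \<in> M" "q \<noteq> p" "(m1 *v axis p 1)$q \<noteq> 0"
    using exists_moving_axis by blast
  obtain h1 c1 where h1: "h1 \<in> SL" "h1 *v axis p 1 = axis p 1" "c1 \<noteq> 0"
      "h1 *v (m1 *v axis p 1) = axis q c1"
    using SL_axis_stabilizer_moves_to_axis[OF m1(3,2) m1(2)] by blast
  obtain h2 c2 where h2: "h2 \<in> SL" "h2 *v axis p 1 = axis p 1" "c2 \<noteq> 0" "h2 *v y = axis q c2"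
    using SL_axis_stabilizer_moves_to_axis[OF k(2,1) m1(2)] by blast
  define h where "h = inv\<^bsub>GL\<^esub> h2 ** h1"
  have h2_inv: "invertible h2" using invertible_if_SL[OF h2(1)] .
  have "h \<in> SL" unfolding h_def by (intro SL_mult_closed SL_inv_closed h1(1) h2(1))
  then have conj_in_M: "h ** m1 ** inv\<^bsub>GL\<^esub> h \<in> M"
    using SL_normalizes m1(1) by blast
  have "inv\<^bsub>GL\<^esub> h2 *v axis p 1 = axis p 1"
    by (rule GL_inv_mult_vec[OF h2_inv h2(2)])
  then have "h *v axis p 1 = axis p 1"
    by (simp add: h_def h1(2) flip: matrix_vector_mul_assoc)
  then have "inv\<^bsub>GL\<^esub> h *v axis p 1 = axis p 1"
    by (rule GL_inv_mult_vec[OF invertible_if_SL[OF \<open>h \<in> SL\<close>]])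
  then have "(h ** m1 ** inv\<^bsub>GL\<^esub> h) *v axis p 1 = inv\<^bsub>GL\<^esub> h2 *v axis q c1"
    by (simp add: h_def h1(4) flip: matrix_vector_mul_assoc)
  also have "axis q c1 = scale_right (axis q c2) (inverse c2 * c1)"
    using h2(3) by (simp add: vec_eq_iff axis_nth_if flip: mult.assoc)
  also have "inv\<^bsub>GL\<^esub> h2 *v \<dots> = scale_right y (inverse c2 * c1)"
    using GL_inv_mult_vec[OF h2_inv h2(4)] by (simp add: matrix_vector_mult_scale_right)
  finally show ?thesis
    using conj_in_M h1(3) h2(3) by (intro bexI[OF _ conj_in_M] exI[of _ "inverse c2 * c1"]) auto
qed

lemma transitive_on_lines:
  assumes "y \<noteq> 0"
  shows "\<exists>m\<in>M. \<exists>c. c \<noteq> 0 \<and> m *v axis p 1 = scale_right y c"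
proof (cases "\<forall>k. k \<noteq> p \<longrightarrow> y$k = 0")
  case True
  then have y: "y = axis p (y$p)"
    by (auto simp: vec_eq_iff axis_nth_if)
  with assms have "y$p \<noteq> 0"
    by auto
  have "mat 1 *v axis p 1 = scale_right y (inverse (y$p))"
    using \<open>y$p \<noteq> 0\<close> by (subst y) (simp add: vec_eq_iff axis_nth_if)
  with mat_1_in_M \<open>y$p \<noteq> 0\<close> show ?thesis
    by (intro bexI[of _ "mat 1"] exI[of _ "inverse (y$p)"]) auto
next
  case False
  then show ?thesis
    using transitive_on_lines_off_axis by blast
qed

lemma subgroup_M_row_shears: "subgroup (M <#>\<^bsub>GL\<^esub> row_shears p) GL"
  using group.subgroup_set_mult_if_normalizes[OF group_GL subgroup_M subgroup_row_shears]
    SL_normalizes row_shears_subset_SL by fastforce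

lemma M_row_shears_mult_closed:
  "x \<in> M <#>\<^bsub>GL\<^esub> row_shears p \<Longrightarrow> y \<in> M <#>\<^bsub>GL\<^esub> row_shears p \<Longrightarrow>
    x ** y \<in> M <#>\<^bsub>GL\<^esub> row_shears p"
  using subgroup.m_closed[OF subgroup_M_row_shears] by fastforce

lemma M_subset_M_row_shears: "M \<subseteq> M <#>\<^bsub>GL\<^esub> row_shears p"
proof
  fix m
  assume "m \<in> M"
  moreover have "(mat 1 :: 'a^'n^'n) \<in> row_shears p"
    unfolding row_shears_def by (rule CollectI, rule exI[of _ 0]) (simp add: row_shear_0)
  ultimately show "m \<in> M <#>\<^bsub>GL\<^esub> row_shears p"
    unfolding set_mult_def by (intro UN_I[of m] UN_I[of "mat 1"]) auto
qed

lemma row_shears_subset_M_row_shears: "row_shears p \<subseteq> M <#>\<^bsub>GL\<^esub> row_shears p"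
  using mat_1_in_M by (force simp: set_mult_def)

text \<open>Write \<open>g = m h\<close> with \<open>m \<in> M\<close> and \<open>h\<close> fixing the line through \<open>axis p 1\<close>;
  then \<open>h\<close> normalizes \<open>row_shears p\<close>.\<close>

lemma SL_conj_row_shears:
  assumes g: "g \<in> SL" and u: "u \<in> row_shears p"
  shows "g ** u ** inv\<^bsub>GL\<^esub> g \<in> M <#>\<^bsub>GL\<^esub> row_shears p"
proof -
  have g_inv: "invertible g" using invertible_if_SL[OF g] .
  have "g *v axis p 1 \<noteq> 0"
  proof
    assume "g *v axis p 1 = 0"
    then have "axis p 1 = inv\<^bsub>GL\<^esub> g *v 0"
      using GL_inv_mult_vec[OF g_inv] by metis
    then show False by (simp add: vec_eq_iff) (metis axis_nth one_neq_zero)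
  qed
  then obtain m c where m: "m \<in> M" "c \<noteq> 0" "m *v axis p 1 = scale_right (g *v axis p 1) c"
    using transitive_on_lines by blast
  have m_inv: "invertible m" using invertible_if_M[OF m(1)] .
  define h where "h = inv\<^bsub>GL\<^esub> m ** g"
  have h_inv: "invertible h" unfolding h_def using m_inv g_inv by (simp add: invertible_mult)
  have "g *v axis p 1 = scale_right (m *v axis p 1) (inverse c)"
    using m(2,3) by simp
  then have "h *v axis p 1 = scale_right (inv\<^bsub>GL\<^esub> m *v (m *v axis p 1)) (inverse c)"
    by (simp add: h_def matrix_vector_mult_scale_right flip: matrix_vector_mul_assoc)
  also have "\<dots> = axis p (inverse c)"
    using m_inv by (simp add: vec_eq_iff axis_nth_if matrix_vector_mul_assoc)
  finally have "h ** u ** inv\<^bsub>GL\<^esub> h \<in> row_shears p"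
    using m(2) conj_row_shears[OF h_inv _ _ u] by simp
  then have "h ** u ** inv\<^bsub>GL\<^esub> h \<in> M <#>\<^bsub>GL\<^esub> row_shears p"
    using row_shears_subset_M_row_shears by blast
  moreover have "m \<in> M <#>\<^bsub>GL\<^esub> row_shears p" "inv\<^bsub>GL\<^esub> m \<in> M <#>\<^bsub>GL\<^esub> row_shears p"
    using m(1) M_inv_closed M_subset_M_row_shears by auto
  moreover have "g ** u ** inv\<^bsub>GL\<^esub> g = m ** (h ** u ** inv\<^bsub>GL\<^esub> h) ** inv\<^bsub>GL\<^esub> m"
    using m_inv g_inv by (simp add: h_def GL_inv_mult flip: matrix_mul_assoc)
  ultimately show ?thesis
    by (simp add: M_row_shears_mult_closed)
qed

lemma transvection_in_M_row_shears:
  assumes "i \<noteq> j"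
  shows "transvection i j a \<in> M <#>\<^bsub>GL\<^esub> row_shears p"
proof -
  consider "i = p" | "i \<noteq> p" "j \<noteq> p" | "i \<noteq> p" "j = p" by blast
  then show ?thesis
  proof cases
    case 1
    then have "transvection i j a \<in> row_shears p"
      using assms by (simp add: transvection_in_row_shears)
    then show ?thesis
      using row_shears_subset_M_row_shears by blast
  next
    case 2
    have "transvection i j a
        = (transvection i p 1 ** transvection p j a ** inv\<^bsub>GL\<^esub> (transvection i p 1)) ** transvection p j (-a)"
      using 2 assms by (simp add: GL_inv_transvection transvection_commutator)
    moreover have "transvection i p 1 ** transvection p j a ** inv\<^bsub>GL\<^esub> (transvection i p 1)
        \<in> M <#>\<^bsub>GL\<^esub> row_shears p"
      using 2 by (intro SL_conj_row_shears transvection_in_SL transvection_in_row_shears)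
    moreover have "transvection p j (-a) \<in> M <#>\<^bsub>GL\<^esub> row_shears p"
      using 2 transvection_in_row_shears[of j p "-a"] row_shears_subset_M_row_shears by blast
    ultimately show ?thesis by (simp add: M_row_shears_mult_closed)
  next
    case 3
    define w where "w = transvection p i 1 ** transvection i p (-1) ** transvection p i (1::'a)"
    have "w \<in> SL" unfolding w_def using 3 by (intro SL_mult_closed transvection_in_SL) auto
    have "w ** transvection p i (-a) ** inv\<^bsub>GL\<^esub> w = transvection i p a ** w ** inv\<^bsub>GL\<^esub> w"
      using transvection_conj_weyl[OF 3(1), of a] by (simp add: w_def)
    also have "\<dots> = transvection i p a"
      using invertible_if_SL[OF \<open>w \<in> SL\<close>] by (simp flip: matrix_mul_assoc)
    finally have "transvection i j a = w ** transvection p i (-a) ** inv\<^bsub>GL\<^esub> w"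
      using 3 by simp
    also have "\<dots> \<in> M <#>\<^bsub>GL\<^esub> row_shears p"
      using 3 by (intro SL_conj_row_shears \<open>w \<in> SL\<close> transvection_in_row_shears)
    finally show ?thesis .
  qed
qed

lemma SL_subset_M_row_shears: "SL \<subseteq> M <#>\<^bsub>GL\<^esub> row_shears p"
  using SL_subset_if_transvections[OF subgroup_M_row_shears transvection_in_M_row_shears] .

lemma SL_commutator_in_M:
  assumes "e \<in> SL" "f \<in> SL"
  shows "e ** f ** inv\<^bsub>GL\<^esub> e ** inv\<^bsub>GL\<^esub> f \<in> M"
  using group.commutator_in_if_set_mult_abelian[OF group_GL subgroup_M subgroup_row_shears
      _ _ SL_subset_M_row_shears[THEN subsetD, OF assms(1)] SL_subset_M_row_shears[THEN subsetD, OF assms(2)]]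
    SL_normalizes row_shears_subset_SL row_shears_commute
  by fastforce

text \<open>Conjugating \<open>transvection i j c\<close> by \<open>dilation_pair i j d\<close> multiplies the entry
  to \<open>d c d\<close>, so \<open>M\<close> contains \<open>transvection i j (d c d - c)\<close> as a commutator in \<open>SL\<close>.\<close>

lemma transvection_in_M:
  assumes "infinite (UNIV :: 'a set)" "i \<noteq> j"
  shows "transvection i j z \<in> M"
proof (rule infinite_division_ring_additively_generated[OF assms(1), of "\<lambda>x. transvection i j x \<in> M"])
  fix x y
  assume "transvection i j x \<in> M" "transvection i j y \<in> M"
  then show "transvection i j (x + y) \<in> M"
    using M_mult_closed transvection_add[OF assms(2)] by metis
next
  fix x
  assume "transvection i j x \<in> M"
  then show "transvection i j (-x) \<in> M"
    using M_inv_closed GL_inv_transvection[OF assms(2)] by metis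
next
  fix d c :: 'a
  assume "d \<noteq> 0"
  then have "dilation_pair i j d ** transvection i j c ** inv\<^bsub>GL\<^esub> (dilation_pair i j d)
      ** inv\<^bsub>GL\<^esub> (transvection i j c) = transvection i j (d * c * d - c)"
    using assms(2)
    by (simp add: GL_inv_dilation_pair GL_inv_transvection dilation_pair_conj_transvection
        transvection_add)
  moreover have "dilation_pair i j d ** transvection i j c ** inv\<^bsub>GL\<^esub> (dilation_pair i j d)
      ** inv\<^bsub>GL\<^esub> (transvection i j c) \<in> M"
    using assms(2) \<open>d \<noteq> 0\<close> by (intro SL_commutator_in_M dilation_pair_in_SL transvection_in_SL)
  ultimately show "transvection i j (d * c * d - c) \<in> M" by simp
qed

theorem SL_subset_M: "infinite (UNIV :: 'a set) \<Longrightarrow> SL \<subseteq> M"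
  by (rule SL_subset_if_transvections[OF subgroup_M transvection_in_M])

end

section \<open>Almost subnormal subgroups\<close>

lemma SL_subset_if_normal_step:
  fixes H H' :: "('a::division_ring^'n^'n) set"
  assumes inf: "infinite (UNIV::'a set)" and card: "CARD('n) \<ge> 2"
    and H: "subgroup H GL" and H': "subgroup H' GL"
    and SL_H: "SL \<subseteq> H" and not_central: "\<not> H' \<subseteq> group_center GL"
    and normal: "H' \<lhd> GL\<lparr>carrier := H\<rparr>"
  shows "SL \<subseteq> H'"
proof -
  have "e ** m ** inv\<^bsub>GL\<^esub> e \<in> H'" if "e \<in> SL" "m \<in> H'" for e m
  proof -
    have "e \<in> H" using that SL_H by blast
    then show ?thesis
      using normal.inv_op_closed2[OF normal, of e m] that group.m_inv_consistent[OF group_GL H]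
      by simp
  qed
  then interpret SL_normalized_subgroup H'
    by (rule SL_normalized_subgroup.intro[OF H' _ not_central card])
  show ?thesis by (rule SL_subset_M[OF inf])
qed

lemma SL_subset_if_finite_index_step:
  fixes H H' :: "('a::division_ring^'n^'n) set"
  assumes inf: "infinite (UNIV::'a set)" and card: "CARD('n) \<ge> 2"
    and H: "subgroup H GL" and H': "subgroup H' GL"
    and SL_H: "SL \<subseteq> H" and finite_index: "finite (rcosets\<^bsub>GL\<lparr>carrier := H\<rparr>\<^esub> H')"
  shows "SL \<subseteq> H'"
proof -
  interpret GL: group "GL::('a^'n^'n) monoid" by (rule group_GL)
  let ?C = "normal_core GL H H'"
  obtain p q :: 'n where "p \<noteq> q" using two_distinct_elements[OF card] by blast
  have "range (transvection p q) \<subseteq> H"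
    using transvection_in_SL[OF \<open>p \<noteq> q\<close>] SL_H by blast
  then obtain a b where "a \<noteq> b" "transvection p q a ** inv\<^bsub>GL\<^esub> (transvection p q b) \<in> ?C"
    using GL.normal_core_pigeonhole[OF H H' finite_index inf] by force
  then have "transvection p q (a - b) \<in> ?C"
    using \<open>p \<noteq> q\<close> by (simp add: GL_inv_transvection transvection_add)
  moreover have "transvection p q (a - b) \<notin> group_center GL"
    using \<open>a \<noteq> b\<close> \<open>p \<noteq> q\<close> by (intro transvection_not_central) auto
  ultimately have not_central: "\<not> ?C \<subseteq> group_center GL"
    by blast
  have "e ** c ** inv\<^bsub>GL\<^esub> e \<in> ?C" if "e \<in> SL" "c \<in> ?C" for e c
    using GL.normal_core_conj_closed[OF H, of e c] that SL_H by auto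
  then interpret SL_normalized_subgroup ?C
    by (rule SL_normalized_subgroup.intro[OF GL.subgroup_normal_core[OF H H'] _ not_central card])
  have "SL \<subseteq> ?C" by (rule SL_subset_M[OF inf])
  then show ?thesis
    using GL.normal_core_subset[OF H] by blast
qed

lemma SL_subset_if_almost_subnormal:
  fixes N :: "('a::division_ring^'n^'n) set"
  assumes inf: "infinite (UNIV :: 'a set)" and card: "CARD('n) \<ge> 2"
    and not_central: "\<not> N \<subseteq> group_center GL"
    and "almost_subnormal N GL"
  shows "SL \<subseteq> N"
proof -
  obtain r Hs where Hs: "Hs 0 = carrier GL" "Hs r = N" "\<forall>i\<le>r. subgroup (Hs i) GL"
    "\<forall>i<r. Hs (Suc i) \<subseteq> Hs i \<and> (Hs (Suc i) \<lhd> GL\<lparr>carrier := Hs i\<rparr> \<or>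
         finite (rcosets\<^bsub>GL\<lparr>carrier := Hs i\<rparr>\<^esub> Hs (Suc i)))"
    using assms(4) unfolding almost_subnormal_def by blast
  have N_subset: "N \<subseteq> Hs i" if "i \<le> r" for i
    using that
  proof (induction i rule: inc_induct)
    case (step i)
    then show ?case using Hs(4) by blast
  qed (simp add: Hs(2))
  have "SL \<subseteq> Hs i" if "i \<le> r" for i
    using that
  proof (induction i)
    case 0
    then show ?case
      using Hs(1) subgroup.subset[OF subgroup_SL] by simp
  next
    case (Suc i)
    then have "subgroup (Hs i) GL" "subgroup (Hs (Suc i)) GL" "SL \<subseteq> Hs i"
      and "Hs (Suc i) \<lhd> GL\<lparr>carrier := Hs i\<rparr> \<or> finite (rcosets\<^bsub>GL\<lparr>carrier := Hs i\<rparr>\<^esub> Hs (Suc i))"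
      using Hs(3,4) by auto
    moreover have "\<not> Hs (Suc i) \<subseteq> group_center GL"
      using not_central N_subset[OF Suc.prems] by blast
    ultimately show ?case
      using SL_subset_if_normal_step[OF inf card] SL_subset_if_finite_index_step[OF inf card]
      by blast
  qed
  then show ?thesis
    using Hs(2) by blast
qed

theorem theorem3p3:
  fixes N :: "('a::division_ring ^'n^'n) set"
  assumes "infinite (UNIV :: 'a set)"
    and "CARD('n) \<ge> 2"
    and "subgroup N (GL :: ('a ^'n^'n) monoid)"
    and "\<not> N \<subseteq> group_center (GL :: ('a ^'n^'n) monoid)"
  shows "(almost_subnormal N (GL :: ('a ^'n^'n) monoid) \<longleftrightarrow> subnormal N (GL :: ('a ^'n^'n) monoid))
       \<and> (subnormal N (GL :: ('a ^'n^'n) monoid) \<longleftrightarrow> N \<lhd> (GL :: ('a ^'n^'n) monoid))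
       \<and> (N \<lhd> (GL :: ('a ^'n^'n) monoid) \<longleftrightarrow> (SL :: ('a ^'n^'n) set) \<subseteq> N)"
proof -
  have "almost_subnormal N GL \<Longrightarrow> SL \<subseteq> N"
    by (rule SL_subset_if_almost_subnormal[OF assms(1,2,4)])
  moreover have "SL \<subseteq> N \<Longrightarrow> N \<lhd> GL"
    by (rule normal_if_SL_subset[OF assms(2,3)])
  moreover have "N \<lhd> GL \<Longrightarrow> subnormal N GL"
    by (rule normal_imp_subnormal)
  moreover have "subnormal N GL \<Longrightarrow> almost_subnormal N GL"
    by (rule subnormal_imp_almost_subnormal)
  ultimately show ?thesis
    by blast
qed

end
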